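(* Under the setting in the context, let $z^\star\in H$ satisfy $a(z^\star,v)=b(v)$ for all $v\in H$ and $\operatorname{dist}(z^\star,V_k)\le\hat\epsilon_k$ for all $k=0,\dots,n$, and let $z_{\mathrm{MS}}$ be any solution of (MS). Then $f(P_{V_n}z^\star)\le\gamma^2\epsilon_n^2$ and $f(z_{\mathrm{MS}})\le\gamma^2\epsilon_n^2$. Moreover, writing $P_{V_n}z^\star-z_{\mathrm{MS}}=\sum_{j=1}^n\beta_jv_j^*$ with $\beta_j=\langle v_j^*,P_{V_n}z^\star-z_{\mathrm{MS}}\rangle$, one has $\sum_{j=1}^n\sigma_j^2\beta_j^2\le4\gamma^2\epsilon_n^2$.
   Context: $H$ is a real Hilbert space, $a:H\times H\to\mathbb R$ bilinear, $b:H\to\mathbb R$ linear. $V_0\subset\dots\subset V_n\subset H$ are subspaces with $\dim V_k=k$ and orthonormal basis $\{v_1,\dots,v_n\}$ of $V_n$ with $V_k=\operatorname{span}\{v_1,\dots,v_k\}$; $P_{V_n}$ is the orthogonal projector onto $V_n$. $Z_m$ is a subspace of dimension $m\ge n$ with orthonormal basis $\{z_1,\dots,z_m\}$. Each $a(\cdot,z_j)$ is continuous with Riesz representer $r_j$, i.e. $a(v,z_j)=\langle r_j,v\rangle$ for all $v$. $G\in\mathbb R^{m\times n}$, $G_{ij}=\langle r_i,v_j\rangle$, has SVD $G=U\Lambda X^T$ with $U,X=(x_{ij})$ orthogonal and singular values $\sigma_1\ge\dots\ge\sigma_n\ge0$ on the diagonal of $\Lambda$. Set $v_j^*=\sum_{i=1}^n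 x_{ij}v_i$ ($j=1,\dots,n$). Given positive $\hat\epsilon_0,\dots,\hat\epsilon_n$, problem (MS) is: minimize $f(v)=\sum_{j=1}^m(b(z_j)-a(v,z_j))^2$ over $v\in V_n$ subject to $\operatorname{dist}(v,V_k)\le\hat\epsilon_k$, $k=0,\dots,n$. $\epsilon_n=\operatorname{dist}(z^\star,V_n)$ and $\gamma=\sup\{(\sum_{j=1}^m\langle r_j,v\rangle^2)^{1/2}: v\in V_n^\perp,\|v\|=1\}$. *)

theory Defs
  imports "HOL-Analysis.Analysis"
begin

definition orth_proj :: "'h::real_inner set \<Rightarrow> 'h \<Rightarrow> 'h" where
  "orth_proj S x = (THE p. p \<in> S \<and> (\<forall>w\<in>S. inner (x - p) w = 0))"

definition orthonormal_fam :: "(nat \<Rightarrow> 'h::real_inner) \<Rightarrow> nat \<Rightarrow> bool" where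
  "orthonormal_fam e N \<longleftrightarrow> (\<forall>i\<in>{1..N}. \<forall>j\<in>{1..N}. inner (e i) (e j) = (if i = j then 1 else 0))"

definition Vsp :: "(nat \<Rightarrow> 'h::real_inner) \<Rightarrow> nat \<Rightarrow> 'h set" where
  "Vsp v k = span (v ` {1..k})"

definition orth_mat :: "(nat \<Rightarrow> nat \<Rightarrow> real) \<Rightarrow> nat \<Rightarrow> bool" where
  "orth_mat Q N \<longleftrightarrow> (\<forall>i\<in>{1..N}. \<forall>j\<in>{1..N}. (\<Sum>k=1..N. Q k i * Q k j) = (if i = j then 1 else 0))"

definition ms_f :: "('h \<Rightarrow> 'h \<Rightarrow> real) \<Rightarrow> ('h \<Rightarrow> real) \<Rightarrow> (nat \<Rightarrow> 'h) \<Rightarrow> nat \<Rightarrow> 'h \<Rightarrow> real" where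
  "ms_f a b z m w = (\<Sum>j=1..m. (b (z j) - a w (z j))\<^sup>2)"

definition ms_feasible :: "(nat \<Rightarrow> 'h::real_inner) \<Rightarrow> nat \<Rightarrow> (nat \<Rightarrow> real) \<Rightarrow> 'h \<Rightarrow> bool" where
  "ms_feasible v n eps w \<longleftrightarrow> w \<in> Vsp v n \<and> (\<forall>k\<in>{0..n}. infdist w (Vsp v k) \<le> eps k)"

definition ms_solution :: "('h::real_inner \<Rightarrow> 'h \<Rightarrow> real) \<Rightarrow> ('h \<Rightarrow> real) \<Rightarrow> (nat \<Rightarrow> 'h) \<Rightarrow> nat
    \<Rightarrow> (nat \<Rightarrow> 'h) \<Rightarrow> nat \<Rightarrow> (nat \<Rightarrow> real) \<Rightarrow> 'h \<Rightarrow> bool" where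
  "ms_solution a b z m v n eps w \<longleftrightarrow>
     ms_feasible v n eps w \<and> (\<forall>u. ms_feasible v n eps u \<longrightarrow> ms_f a b z m w \<le> ms_f a b z m u)"

definition gamma_const :: "(nat \<Rightarrow> 'h::real_inner) \<Rightarrow> nat \<Rightarrow> 'h set \<Rightarrow> real" where
  "gamma_const r m Vn = Sup {sqrt (\<Sum>j=1..m. (inner (r j) w)\<^sup>2) | w. w \<in> orthogonal_comp Vn \<and> norm w = 1}"

end

theory Submission
  imports Defs
begin

text \<open>Since f(w) is the squared length of the vector of residuals a(z^\<star> - w, z_j) = <r_j, z^\<star> - w>,
and z^\<star> - P z^\<star> lies in V_n^\<perp>, the definition of \<gamma> gives f(P z^\<star>) \<le> \<gamma>^2 \<epsilon>_n^2. Projecting onto V_n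
does not increase the distance to any V_k \<subseteq> V_n, so P z^\<star> is feasible for (MS) and the minimiser
does at least as well. Finally, P z^\<star> - z_MS has the residual vector of z_MS minus that of P z^\<star>,
hence squared length at most 4 \<gamma>^2 \<epsilon>_n^2; in the right singular basis v_j^* this squared length is
\<Sum> \<sigma>_j^2 \<beta>_j^2, because U has orthonormal columns.\<close>

lemma orth_proj_unique:
  assumes "subspace S" "p \<in> S" "\<forall>w\<in>S. inner (x - p) w = 0"
  shows "orth_proj S x = p"
  unfolding orth_proj_def
proof (rule the_equality)
  show "p \<in> S \<and> (\<forall>w\<in>S. inner (x - p) w = 0)" using assms by blast
next
  fix q assume q: "q \<in> S \<and> (\<forall>w\<in>S. inner (x - q) w = 0)"
  have "p - q \<in> S" using assms q by (simp add: subspace_diff)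
  then have "inner (p - q) (p - q) = inner (x - q) (p - q) - inner (x - p) (p - q)"
    by (simp add: inner_diff_left)
  also have "\<dots> = 0" using q assms \<open>p - q \<in> S\<close> by simp
  finally show "q = p" by simp
qed

lemma le_infdistI:
  assumes "A \<noteq> {}" "\<And>a. a \<in> A \<Longrightarrow> d \<le> dist x a"
  shows "d \<le> infdist x A"
  unfolding infdist_notempty[OF assms(1)] using assms by (intro cINF_greatest)

lemma foot_dist_le:
  assumes "subspace S" "p \<in> S" "\<forall>w\<in>S. inner (x - p) w = 0" "q \<in> S"
  shows "norm (x - p) \<le> norm (x - q)" "norm (p - q) \<le> norm (x - q)"
proof -
  have pq: "p - q \<in> S" using assms by (simp add: subspace_diff)
  have sum: "(norm (x - q))\<^sup>2 = (norm (x - p))\<^sup>2 + (norm (p - q))\<^sup>2"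
    using norm_add_Pythagorean[of "x - p" "p - q"] assms(3) pq by (simp add: orthogonal_def)
  show "norm (x - p) \<le> norm (x - q)" "norm (p - q) \<le> norm (x - q)"
    using sum by (simp_all add: power2_le_imp_le)
qed

lemma infdist_eq_norm_foot:
  assumes "subspace S" "p \<in> S" "\<forall>w\<in>S. inner (x - p) w = 0"
  shows "infdist x S = norm (x - p)"
proof (rule antisym)
  show "infdist x S \<le> norm (x - p)"
    using infdist_le[OF assms(2)] by (simp add: dist_norm)
  show "norm (x - p) \<le> infdist x S"
    using assms foot_dist_le(1)[OF assms] by (intro le_infdistI) (auto simp: dist_norm)
qed

lemma infdist_foot_le:
  assumes "subspace S" "p \<in> S" "\<forall>w\<in>S. inner (x - p) w = 0" "T \<subseteq> S"
  shows "infdist p T \<le> infdist x T"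
proof (cases "T = {}")
  case False
  show ?thesis
  proof (rule le_infdistI[OF False])
    fix q assume "q \<in> T"
    then have "norm (p - q) \<le> norm (x - q)"
      using assms foot_dist_le(2)[OF assms(1-3), of q] by blast
    then show "infdist p T \<le> dist x q"
      using infdist_le[OF \<open>q \<in> T\<close>, of p] by (simp add: dist_norm)
  qed
qed (simp add: infdist_def)

definition fourier_sum :: "(nat \<Rightarrow> 'h::real_inner) \<Rightarrow> nat \<Rightarrow> 'h \<Rightarrow> 'h" where
  "fourier_sum v k x = (\<Sum>i=1..k. inner (v i) x *\<^sub>R v i)"

lemma linear_fourier_sum: "linear (fourier_sum v k)"
  by (rule linearI)
    (simp_all add: fourier_sum_def inner_add_right scaleR_add_left sum.distrib scaleR_sum_right)

lemma subspace_Vsp: "subspace (Vsp v k)"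
  by (simp add: Vsp_def)

lemma fourier_sum_in_Vsp: "fourier_sum v k x \<in> Vsp v k"
  unfolding fourier_sum_def Vsp_def by (intro span_sum span_scale span_base) auto

lemma inner_fourier_sum_basis:
  assumes "orthonormal_fam v k" "j \<in> {1..k}"
  shows "inner (fourier_sum v k x) (v j) = inner x (v j)"
proof -
  have "inner (fourier_sum v k x) (v j) = (\<Sum>i=1..k. if i = j then inner (v i) x else 0)"
    unfolding fourier_sum_def inner_sum_left using assms
    by (intro sum.cong) (auto simp: orthonormal_fam_def)
  then show ?thesis using assms(2) by (simp add: inner_commute)
qed

lemma fourier_sum_eq_self:
  assumes "orthonormal_fam v k" "w \<in> Vsp v k"
  shows "fourier_sum v k w = w"
proof -
  have basis: "fourier_sum v k (v j) = v j" if "j \<in> {1..k}" for j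
  proof -
    have "fourier_sum v k (v j) = (\<Sum>i=1..k. if i = j then v i else 0)"
      unfolding fourier_sum_def using that assms(1)
      by (intro sum.cong) (auto simp: orthonormal_fam_def)
    then show ?thesis using that by simp
  qed
  have "fourier_sum v k w = id w"
    using assms(2) unfolding Vsp_def
    by (rule linear_eq_on_span[OF linear_fourier_sum linear_id, rotated]) (auto simp: basis)
  then show ?thesis by simp
qed

lemma fourier_sum_residual_orth:
  assumes "orthonormal_fam v k" "w \<in> Vsp v k"
  shows "inner (x - fourier_sum v k x) w = 0"
proof -
  have "inner (x - fourier_sum v k x) w = inner (x - fourier_sum v k x) (fourier_sum v k w)"
    using fourier_sum_eq_self[OF assms] by simp
  also have "\<dots> = (\<Sum>i=1..k. inner (v i) w * inner (x - fourier_sum v k x) (v i))"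
    unfolding fourier_sum_def inner_sum_right by simp
  also have "\<dots> = 0"
    using inner_fourier_sum_basis[OF assms(1)] by (simp add: inner_diff_left)
  finally show ?thesis .
qed

lemma orth_proj_Vsp:
  assumes "orthonormal_fam v k"
  shows "orth_proj (Vsp v k) x = fourier_sum v k x"
  using assms fourier_sum_residual_orth by (blast intro: orth_proj_unique subspace_Vsp fourier_sum_in_Vsp)

lemma orth_proj_Vsp_in: "orthonormal_fam v k \<Longrightarrow> orth_proj (Vsp v k) x \<in> Vsp v k"
  by (simp add: orth_proj_Vsp fourier_sum_in_Vsp)

lemma orth_proj_Vsp_residual_orth:
  "orthonormal_fam v k \<Longrightarrow> \<forall>w\<in>Vsp v k. inner (x - orth_proj (Vsp v k) x) w = 0"
  by (simp add: orth_proj_Vsp fourier_sum_residual_orth)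

lemma infdist_Vsp:
  "orthonormal_fam v k \<Longrightarrow> infdist x (Vsp v k) = norm (x - orth_proj (Vsp v k) x)"
  by (simp add: infdist_eq_norm_foot[OF subspace_Vsp orth_proj_Vsp_in orth_proj_Vsp_residual_orth])

lemma Vsp_mono: "k \<le> n \<Longrightarrow> Vsp v k \<subseteq> Vsp v n"
  unfolding Vsp_def by (intro span_mono image_mono) auto

lemma infdist_orth_proj_Vsp_le:
  assumes "orthonormal_fam v n" "k \<le> n"
  shows "infdist (orth_proj (Vsp v n) x) (Vsp v k) \<le> infdist x (Vsp v k)"
  using infdist_foot_le[OF subspace_Vsp orth_proj_Vsp_in orth_proj_Vsp_residual_orth Vsp_mono] assms
  by blast

lemma bdd_above_gamma_set:
  fixes r :: "nat \<Rightarrow> 'h::real_inner"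
  shows "bdd_above {sqrt (\<Sum>j=1..m. (inner (r j) w)\<^sup>2) | w. w \<in> W \<and> norm w = 1}"
proof (rule bdd_aboveI)
  fix x assume "x \<in> {sqrt (\<Sum>j=1..m. (inner (r j) w)\<^sup>2) | w. w \<in> W \<and> norm w = 1}"
  then obtain w where w: "x = sqrt (\<Sum>j=1..m. (inner (r j) w)\<^sup>2)" "norm w = 1" by auto
  have "(inner (r j) w)\<^sup>2 \<le> (norm (r j))\<^sup>2" for j
    using Cauchy_Schwarz_ineq2[of "r j" w] w(2) by (metis abs_ge_zero power2_abs power_mono mult_1_right)
  then have "(\<Sum>j=1..m. (inner (r j) w)\<^sup>2) \<le> (\<Sum>j=1..m. (norm (r j))\<^sup>2)"
    by (rule sum_mono)
  then show "x \<le> sqrt (\<Sum>j=1..m. (norm (r j))\<^sup>2)" using w(1) by simp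
qed

lemma sum_inner_power2_le_gamma:
  fixes r :: "nat \<Rightarrow> 'h::real_inner"
  assumes w: "w \<in> orthogonal_comp V"
  shows "(\<Sum>j=1..m. (inner (r j) w)\<^sup>2) \<le> (gamma_const r m V)\<^sup>2 * (norm w)\<^sup>2"
proof (cases "w = 0")
  case False
  define u where "u = w /\<^sub>R norm w"
  have "norm u = 1" using False by (simp add: u_def)
  moreover have "u \<in> orthogonal_comp V"
    using w by (simp add: u_def orthogonal_comp_def orthogonal_def)
  ultimately have "sqrt (\<Sum>j=1..m. (inner (r j) u)\<^sup>2) \<le> gamma_const r m V"
    unfolding gamma_const_def by (intro cSup_upper[OF _ bdd_above_gamma_set]) blast
  then have u_le: "(\<Sum>j=1..m. (inner (r j) u)\<^sup>2) \<le> (gamma_const r m V)\<^sup>2"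
    by (metis power_mono real_sqrt_ge_zero real_sqrt_pow2 sum_nonneg zero_le_power2)
  have w_eq: "w = norm w *\<^sub>R u" using False by (simp add: u_def)
  have "(\<Sum>j=1..m. (inner (r j) w)\<^sup>2) = (norm w)\<^sup>2 * (\<Sum>j=1..m. (inner (r j) u)\<^sup>2)"
    by (subst w_eq) (simp add: power_mult_distrib sum_distrib_left)
  then show ?thesis
    using mult_left_mono[OF u_le, of "(norm w)\<^sup>2"] by (simp add: mult.commute)
qed simp

lemma orth_mat_sum_power2:
  assumes "orth_mat U m" "n \<le> m"
  shows "(\<Sum>l=1..m. (\<Sum>k=1..n. U l k * y k)\<^sup>2) = (\<Sum>k=1..n. (y k)\<^sup>2)"
proof -
  have "(\<Sum>l=1..m. (\<Sum>k=1..n. U l k * y k)\<^sup>2)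
      = (\<Sum>l=1..m. \<Sum>k=1..n. \<Sum>k'=1..n. U l k * U l k' * (y k * y k'))"
    by (simp add: power2_eq_square sum_product mult_ac)
  also have "\<dots> = (\<Sum>k=1..n. \<Sum>l=1..m. \<Sum>k'=1..n. U l k * U l k' * (y k * y k'))"
    by (rule sum.swap)
  also have "\<dots> = (\<Sum>k=1..n. \<Sum>k'=1..n. \<Sum>l=1..m. U l k * U l k' * (y k * y k'))"
    by (rule sum.cong[OF refl], rule sum.swap)
  also have "\<dots> = (\<Sum>k=1..n. \<Sum>k'=1..n. (\<Sum>l=1..m. U l k * U l k') * (y k * y k'))"
    by (simp add: sum_distrib_right)
  also have "\<dots> = (\<Sum>k=1..n. \<Sum>k'=1..n. if k = k' then y k * y k' else 0)"
    using assms unfolding orth_mat_def by (intro sum.cong refl) auto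
  also have "\<dots> = (\<Sum>k=1..n. (y k)\<^sup>2)"
    by (simp add: sum.delta power2_eq_square)
  finally show ?thesis .
qed

lemma sum_power2_add_le:
  fixes f g :: "'a \<Rightarrow> real"
  assumes "(\<Sum>i\<in>A. (f i)\<^sup>2) \<le> c" "(\<Sum>i\<in>A. (g i)\<^sup>2) \<le> c"
  shows "(\<Sum>i\<in>A. (f i + g i)\<^sup>2) \<le> 4 * c"
proof -
  have "(f i + g i)\<^sup>2 \<le> 2 * (f i)\<^sup>2 + 2 * (g i)\<^sup>2" for i
    using zero_le_power2[of "f i - g i"] by (simp add: power2_eq_square algebra_simps)
  then have "(\<Sum>i\<in>A. (f i + g i)\<^sup>2) \<le> 2 * (\<Sum>i\<in>A. (f i)\<^sup>2) + 2 * (\<Sum>i\<in>A. (g i)\<^sup>2)"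
    by (simp add: sum_mono sum_distrib_left flip: sum.distrib)
  then show ?thesis using assms by linarith
qed

lemma ms_f_eq_sum_residual:
  assumes "\<forall>j\<in>{1..m}. \<forall>w. a w (z j) = inner (r j) w" "\<forall>w. a zstar w = b w"
  shows "ms_f a b z m w = (\<Sum>j=1..m. (inner (r j) (zstar - w))\<^sup>2)"
proof -
  have "b (z j) = inner (r j) zstar" if "j \<in> {1..m}" for j
    using assms that by metis
  then show ?thesis
    unfolding ms_f_def using assms(1) by (intro sum.cong) (auto simp: inner_diff_right)
qed

text \<open>The coordinates of d in the right singular basis v_k^* = \<Sum>_i X_ik v_i, weighted by the
singular values, are the coordinates of (<r_l, d>)_l in the orthonormal columns of U.\<close>
lemma sum_inner_power2_svd:
  fixes r v :: "nat \<Rightarrow> 'h::real_inner"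
  assumes "orthonormal_fam v n" "orth_mat U m" "n \<le> m"
    and svd: "\<forall>l\<in>{1..m}. \<forall>j\<in>{1..n}. inner (r l) (v j) = (\<Sum>k=1..n. U l k * \<sigma> k * X j k)"
    and "d \<in> Vsp v n"
  shows "(\<Sum>k=1..n. (\<sigma> k)\<^sup>2 * (inner (\<Sum>i=1..n. X i k *\<^sub>R v i) d)\<^sup>2)
       = (\<Sum>l=1..m. (inner (r l) d)\<^sup>2)"
proof -
  define \<beta> where "\<beta> k = inner (\<Sum>i=1..n. X i k *\<^sub>R v i) d" for k
  have \<beta>_eq: "\<beta> k = (\<Sum>j=1..n. X j k * inner (v j) d)" for k
    unfolding \<beta>_def by (simp add: inner_sum_left)
  have "inner (r l) d = (\<Sum>k=1..n. U l k * (\<sigma> k * \<beta> k))" if "l \<in> {1..m}" for l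
  proof -
    have "inner (r l) d = inner (r l) (fourier_sum v n d)"
      using fourier_sum_eq_self[OF assms(1,5)] by simp
    also have "\<dots> = (\<Sum>j=1..n. inner (v j) d * inner (r l) (v j))"
      by (simp add: fourier_sum_def inner_sum_right)
    also have "\<dots> = (\<Sum>j=1..n. \<Sum>k=1..n. inner (v j) d * (U l k * \<sigma> k * X j k))"
      using svd that by (auto simp: sum_distrib_left intro!: sum.cong)
    also have "\<dots> = (\<Sum>k=1..n. \<Sum>j=1..n. inner (v j) d * (U l k * \<sigma> k * X j k))"
      by (rule sum.swap)
    also have "\<dots> = (\<Sum>k=1..n. U l k * (\<sigma> k * \<beta> k))"
      unfolding \<beta>_eq by (auto simp: sum_distrib_left mult_ac intro!: sum.cong)
    finally show ?thesis .
  qed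
  then have "(\<Sum>l=1..m. (inner (r l) d)\<^sup>2) = (\<Sum>l=1..m. (\<Sum>k=1..n. U l k * (\<sigma> k * \<beta> k))\<^sup>2)"
    by (intro sum.cong) auto
  also have "\<dots> = (\<Sum>k=1..n. (\<sigma> k)\<^sup>2 * (\<beta> k)\<^sup>2)"
    using orth_mat_sum_power2[OF assms(2,3)] by (simp add: power_mult_distrib)
  finally show ?thesis by (simp add: \<beta>_def)
qed

lemma ms_feasible_orth_proj:
  assumes "orthonormal_fam v n" "\<forall>k\<in>{0..n}. infdist x (Vsp v k) \<le> eps k"
  shows "ms_feasible v n eps (orth_proj (Vsp v n) x)"
  unfolding ms_feasible_def
proof (intro conjI ballI)
  show "orth_proj (Vsp v n) x \<in> Vsp v n" using assms(1) by (rule orth_proj_Vsp_in)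
  fix k assume "k \<in> {0..n}"
  then show "infdist (orth_proj (Vsp v n) x) (Vsp v k) \<le> eps k"
    using infdist_orth_proj_Vsp_le[OF assms(1), of k x] assms(2) by force
qed

theorem mainTheorem3:
  fixes a :: "'h::{real_inner,complete_space} \<Rightarrow> 'h \<Rightarrow> real"
    and b :: "'h \<Rightarrow> real"
    and v z r :: "nat \<Rightarrow> 'h"
    and n m :: nat
    and G U X :: "nat \<Rightarrow> nat \<Rightarrow> real"
    and \<sigma> epshat :: "nat \<Rightarrow> real"
    and zstar zMS :: 'h
  assumes a_bilinear: "bilinear a"
    and b_linear: "linear b"
    and v_on: "orthonormal_fam v n"
    and mn: "n \<le> m"
    and z_on: "orthonormal_fam z m"
    and a_cont: "\<forall>j\<in>{1..m}. continuous_on UNIV (\<lambda>w. a w (z j))"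
    and riesz: "\<forall>j\<in>{1..m}. \<forall>w. a w (z j) = inner (r j) w"
    and G_def: "\<forall>i\<in>{1..m}. \<forall>j\<in>{1..n}. G i j = inner (r i) (v j)"
    and U_orth: "orth_mat U m"
    and X_orth: "orth_mat X n"
    and svd: "\<forall>i\<in>{1..m}. \<forall>j\<in>{1..n}. G i j = (\<Sum>k=1..n. U i k * \<sigma> k * X j k)"
    and \<sigma>_mono: "\<forall>i\<in>{1..n}. \<forall>j\<in>{1..n}. i \<le> j \<longrightarrow> \<sigma> j \<le> \<sigma> i"
    and \<sigma>_nonneg: "\<forall>j\<in>{1..n}. 0 \<le> \<sigma> j"
    and epshat_pos: "\<forall>k\<in>{0..n}. 0 < epshat k"
    and zstar_sol: "\<forall>w. a zstar w = b w"
    and zstar_dist: "\<forall>k\<in>{0..n}. infdist zstar (Vsp v k) \<le> epshat k"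
    and zMS_sol: "ms_solution a b z m v n epshat zMS"
  shows "ms_f a b z m (orth_proj (Vsp v n) zstar)
           \<le> (gamma_const r m (Vsp v n))\<^sup>2 * (infdist zstar (Vsp v n))\<^sup>2
       \<and> ms_f a b z m zMS \<le> (gamma_const r m (Vsp v n))\<^sup>2 * (infdist zstar (Vsp v n))\<^sup>2
       \<and> (\<Sum>j=1..n. (\<sigma> j)\<^sup>2 *
            (inner (\<Sum>i=1..n. X i j *\<^sub>R v i) (orth_proj (Vsp v n) zstar - zMS))\<^sup>2)
           \<le> 4 * (gamma_const r m (Vsp v n))\<^sup>2 * (infdist zstar (Vsp v n))\<^sup>2"
proof -
  define P where "P = orth_proj (Vsp v n) zstar"
  define \<gamma> where "\<gamma> = gamma_const r m (Vsp v n)"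
  define \<epsilon> where "\<epsilon> = infdist zstar (Vsp v n)"
  have f_eq: "ms_f a b z m w = (\<Sum>j=1..m. (inner (r j) (zstar - w))\<^sup>2)" for w
    using ms_f_eq_sum_residual[OF riesz zstar_sol] .
  have "zstar - P \<in> orthogonal_comp (Vsp v n)"
    using orth_proj_Vsp_residual_orth[OF v_on]
    by (auto simp: P_def orthogonal_comp_def orthogonal_def inner_commute)
  then have fP: "ms_f a b z m P \<le> \<gamma>\<^sup>2 * \<epsilon>\<^sup>2"
    unfolding f_eq \<gamma>_def \<epsilon>_def infdist_Vsp[OF v_on] P_def by (rule sum_inner_power2_le_gamma)
  have "ms_feasible v n epshat P"
    unfolding P_def using v_on zstar_dist by (rule ms_feasible_orth_proj)
  then have fMS: "ms_f a b z m zMS \<le> \<gamma>\<^sup>2 * \<epsilon>\<^sup>2"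
    using zMS_sol fP unfolding ms_solution_def by fastforce
  have "P - zMS \<in> Vsp v n"
    using zMS_sol orth_proj_Vsp_in[OF v_on]
    by (auto simp: ms_solution_def ms_feasible_def P_def subspace_diff[OF subspace_Vsp])
  moreover have "\<forall>l\<in>{1..m}. \<forall>j\<in>{1..n}. inner (r l) (v j) = (\<Sum>k=1..n. U l k * \<sigma> k * X j k)"
    using G_def svd by simp
  ultimately have "(\<Sum>k=1..n. (\<sigma> k)\<^sup>2 * (inner (\<Sum>i=1..n. X i k *\<^sub>R v i) (P - zMS))\<^sup>2)
      = (\<Sum>l=1..m. (inner (r l) (P - zMS))\<^sup>2)"
    by (rule sum_inner_power2_svd[OF v_on U_orth mn, rotated])
  also have "\<dots> = (\<Sum>l=1..m. (inner (r l) (zstar - zMS) + - inner (r l) (zstar - P))\<^sup>2)"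
    by (simp add: inner_diff_right)
  also have "\<dots> \<le> 4 * (\<gamma>\<^sup>2 * \<epsilon>\<^sup>2)"
    using fMS fP by (intro sum_power2_add_le) (simp_all add: f_eq)
  finally show ?thesis
    using fP fMS by (simp add: P_def \<gamma>_def \<epsilon>_def mult.assoc)
qed

end
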